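(* Let $E\subseteq D$ be a subspace of the Fischer space $\Pi(D)$, i.e., $d^e\in E$ for all $d,e\in E$. Then the algebra $\mathcal{A}(D)/\mathcal{V}(D)$ contains a subalgebra that has a quotient isomorphic to $\mathcal{A}(E)/\mathcal{V}(E)$.
   Context: Let $G$ be a group generated by a conjugacy class $D$ of involutions such that for all $d,e\in D$ the order of $de$ is $1$, $2$ or $3$. The Fischer space $\Pi(D)$ has point set $D$ and lines the triples $\{d,e,d^e\}$ with $d,e\in D$ non-commuting. $\mathcal{A}(D)$ is the $\mathbb{F}_2$-vector space with basis $D$ (finite subsets under symmetric difference), with bilinear product determined by $d*e=d+e+f$ if $\{d,e,f\}$ is a line and $d*e=0$ otherwise. The bilinear form is determined by $\langle d,e\rangle=1$ if $d,e$ do not commute and $0$ otherwise, and $\mathcal{V}(D)$ is its radical. For the subspace $E$, $\mathcal{A}(E)$ is the subalgebra of $\mathcal{A}(D)$ spanned by $E$ (the same construction applied to $E$ and the lines contained in $E$), and $\mathcal{V}(E)$ is the radical of the restriction of $\langle\cdot,\cdot\rangle$ to $\mathcal{A}(E)$. *)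

theory Defs
  imports "HOL-Algebra.Multiplicative_Group" "HOL-Algebra.Generated_Groups"
begin

(* A (not necessarily associative) algebra over F_2, given by carrier, addition,
   multiplication and zero. *)
record 'b f2alg =
  acar :: "'b set"
  aadd :: "'b \<Rightarrow> 'b \<Rightarrow> 'b"
  amul :: "'b \<Rightarrow> 'b \<Rightarrow> 'b"
  azero :: "'b"

definition symdiff :: "'a set \<Rightarrow> 'a set \<Rightarrow> 'a set" where
  "symdiff A B = (A - B) \<union> (B - A)"

definition conjg :: "('g, 'm) monoid_scheme \<Rightarrow> 'g \<Rightarrow> 'g \<Rightarrow> 'g" where
  "conjg G d e = inv\<^bsub>G\<^esub> e \<otimes>\<^bsub>G\<^esub> d \<otimes>\<^bsub>G\<^esub> e"

definition commute :: "('g, 'm) monoid_scheme \<Rightarrow> 'g \<Rightarrow> 'g \<Rightarrow> bool" where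
  "commute G d e \<longleftrightarrow> d \<otimes>\<^bsub>G\<^esub> e = e \<otimes>\<^bsub>G\<^esub> d"

(* product of basis elements: d*e = d+e+d^e (as a set {d,e,d^e}) if {d,e,d^e} is a line,
   i.e. d,e do not commute; 0 otherwise *)
definition basis_prod :: "('g, 'm) monoid_scheme \<Rightarrow> 'g \<Rightarrow> 'g \<Rightarrow> 'g set" where
  "basis_prod G d e = (if commute G d e then {} else {d, e, conjg G d e})"

(* bilinear extension over F_2: coefficient of x is the parity of the number of
   pairs (d,e) \<in> S \<times> T whose basis product contains x *)
definition fprod :: "('g, 'm) monoid_scheme \<Rightarrow> 'g set \<Rightarrow> 'g set \<Rightarrow> 'g set" where
  "fprod G S T = {x. odd (card {(d, e). d \<in> S \<and> e \<in> T \<and> x \<in> basis_prod G d e})}"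

(* bilinear form (value in F_2, True = 1) *)
definition fform :: "('g, 'm) monoid_scheme \<Rightarrow> 'g set \<Rightarrow> 'g set \<Rightarrow> bool" where
  "fform G S T = odd (card {(d, e). d \<in> S \<and> e \<in> T \<and> \<not> commute G d e})"

definition fischer_alg :: "('g, 'm) monoid_scheme \<Rightarrow> 'g set \<Rightarrow> 'g set f2alg" where
  "fischer_alg G X = \<lparr> acar = {S. S \<subseteq> X \<and> finite S}, aadd = symdiff,
                       amul = fprod G, azero = {} \<rparr>"

definition fischer_rad :: "('g, 'm) monoid_scheme \<Rightarrow> 'g set \<Rightarrow> 'g set set" where
  "fischer_rad G X = {S \<in> acar (fischer_alg G X). \<forall>T \<in> acar (fischer_alg G X). \<not> fform G S T}"

definition restrict_alg :: "'b f2alg \<Rightarrow> 'b set \<Rightarrow> 'b f2alg" where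
  "restrict_alg A B = A\<lparr> acar := B \<rparr>"

definition subalgebra :: "'b set \<Rightarrow> 'b f2alg \<Rightarrow> bool" where
  "subalgebra B A \<longleftrightarrow> B \<subseteq> acar A \<and> azero A \<in> B \<and>
     (\<forall>x\<in>B. \<forall>y\<in>B. aadd A x y \<in> B \<and> amul A x y \<in> B)"

definition alg_ideal :: "'b set \<Rightarrow> 'b f2alg \<Rightarrow> bool" where
  "alg_ideal I A \<longleftrightarrow> I \<subseteq> acar A \<and> azero A \<in> I \<and>
     (\<forall>x\<in>I. \<forall>y\<in>I. aadd A x y \<in> I) \<and>
     (\<forall>x\<in>I. \<forall>a\<in>acar A. amul A a x \<in> I \<and> amul A x a \<in> I)"

(* coset x + I (characteristic 2, so x + I = {x + i | i \<in> I}) *)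
definition coset :: "'b f2alg \<Rightarrow> 'b set \<Rightarrow> 'b \<Rightarrow> 'b set" where
  "coset A I x = (\<lambda>i. aadd A x i) ` I"

(* quotient algebra A/I; operations via representatives (well defined for ideals) *)
definition quot_alg :: "'b f2alg \<Rightarrow> 'b set \<Rightarrow> 'b set f2alg" where
  "quot_alg A I = \<lparr> acar = coset A I ` acar A,
     aadd = (\<lambda>C1 C2. coset A I (aadd A (SOME x. x \<in> C1) (SOME y. y \<in> C2))),
     amul = (\<lambda>C1 C2. coset A I (amul A (SOME x. x \<in> C1) (SOME y. y \<in> C2))),
     azero = coset A I (azero A) \<rparr>"

definition alg_iso :: "'b f2alg \<Rightarrow> 'c f2alg \<Rightarrow> bool" where
  "alg_iso A A' \<longleftrightarrow> (\<exists>f. bij_betw f (acar A) (acar A') \<and>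
     (\<forall>x\<in>acar A. \<forall>y\<in>acar A. f (aadd A x y) = aadd A' (f x) (f y) \<and>
                               f (amul A x y) = amul A' (f x) (f y)))"

definition fischer_setting :: "('g, 'm) monoid_scheme \<Rightarrow> 'g set \<Rightarrow> bool" where
  "fischer_setting G D \<longleftrightarrow> group G \<and>
     (\<exists>x\<in>carrier G. x \<noteq> \<one>\<^bsub>G\<^esub> \<and> x \<otimes>\<^bsub>G\<^esub> x = \<one>\<^bsub>G\<^esub> \<and>
        D = {inv\<^bsub>G\<^esub> g \<otimes>\<^bsub>G\<^esub> x \<otimes>\<^bsub>G\<^esub> g | g. g \<in> carrier G}) \<and>
     generate G D = carrier G \<and>
     (\<forall>d\<in>D. \<forall>e\<in>D. group.ord G (d \<otimes>\<^bsub>G\<^esub> e) \<in> {1, 2, 3})"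

end

theory Submission
  imports Defs "HOL-Library.Z2"
begin

text \<open>
  The image of \<open>\<A>(E)\<close> in \<open>\<A>(D)/\<V>(D)\<close> is a subalgebra, and the image of \<open>\<V>(E)\<close> is an
  ideal of it, because \<open>\<V>(E)\<close> is an ideal of \<open>\<A>(E)\<close>: the product is commutative and the form
  is associative, \<open>\<langle>a*b, c\<rangle> = \<langle>a, b*c\<rangle>\<close>. By bilinearity over \<open>\<bbbF>\<^sub>2\<close> associativity is a check on three
  points \<open>d, e, u\<close> of \<open>D\<close>, which uses \<open>d\<^sup>e = e\<^sup>d\<close> for non-commuting \<open>d, e\<close>. Finally
  \<open>\<V>(D) \<inter> \<A>(E) \<subseteq> \<V>(E)\<close>, so by the third isomorphism theorem the subquotient is
  \<open>\<A>(E)/\<V>(E)\<close>.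
\<close>

section \<open>Parity counting in \<open>\<bbbF>\<^sub>2\<close>\<close>

(* Keep sums in bit as ring expressions instead of rewriting them to XOR/AND and cardinalities. *)
declare add_bit_eq_xor[simp del] mult_bit_eq_and[simp del] sum_of_bool_eq[simp del]

lemma of_nat_bit_eq_of_bool_odd: "(of_nat n :: bit) = of_bool (odd n)"
  by (induction n) auto

lemma of_bool_odd_card_pairs:
  assumes "finite S" "finite T"
  shows "(of_bool (odd (card {(d, e). d \<in> S \<and> e \<in> T \<and> P d e})) :: bit)
       = (\<Sum>d\<in>S. \<Sum>e\<in>T. of_bool (P d e))"
proof -
  have "{(d, e). d \<in> S \<and> e \<in> T \<and> P d e} = (S \<times> T) \<inter> {p. case p of (d, e) \<Rightarrow> P d e}"
    by auto
  then have "(of_nat (card {(d, e). d \<in> S \<and> e \<in> T \<and> P d e}) :: bit)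
           = (\<Sum>p\<in>S \<times> T. of_bool (case p of (d, e) \<Rightarrow> P d e))"
    using assms by (simp add: sum_of_bool_eq)
  also have "\<dots> = (\<Sum>d\<in>S. \<Sum>e\<in>T. of_bool (P d e))"
    by (simp add: sum.cartesian_product case_prod_beta)
  finally show ?thesis
    by (simp add: of_nat_bit_eq_of_bool_odd)
qed

lemma of_bool_mem_fprod:
  assumes "finite S" "finite T"
  shows "(of_bool (x \<in> fprod G S T) :: bit) = (\<Sum>d\<in>S. \<Sum>e\<in>T. of_bool (x \<in> basis_prod G d e))"
  unfolding fprod_def using of_bool_odd_card_pairs[OF assms] by simp

lemma of_bool_fform:
  assumes "finite S" "finite T"
  shows "(of_bool (fform G S T) :: bit) = (\<Sum>d\<in>S. \<Sum>e\<in>T. of_bool (\<not> commute G d e))"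
  unfolding fform_def using of_bool_odd_card_pairs[OF assms] by simp

lemma of_bool_mem_symdiff:
  "(of_bool (x \<in> symdiff A B) :: bit) = of_bool (x \<in> A) + of_bool (x \<in> B)"
  unfolding symdiff_def by auto

lemma set_eqI_of_bool_bit:
  "(\<And>x. (of_bool (x \<in> A) :: bit) = of_bool (x \<in> B)) \<Longrightarrow> A = B"
  by (metis (full_types) of_bool_eq_iff subsetI subset_antisym)

lemma finite_symdiff [simp]: "finite A \<Longrightarrow> finite B \<Longrightarrow> finite (symdiff A B)"
  by (simp add: symdiff_def)

lemma symdiff_subset: "A \<subseteq> X \<Longrightarrow> B \<subseteq> X \<Longrightarrow> symdiff A B \<subseteq> X"
  by (auto simp: symdiff_def)

lemma sum_eq_sum_superset_of_bool:
  assumes "finite X" "A \<subseteq> X"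
  shows "sum g A = (\<Sum>x\<in>X. (of_bool (x \<in> A) :: bit) * g x)"
proof -
  have "(\<Sum>x\<in>X. (of_bool (x \<in> A) :: bit) * g x) = (\<Sum>x\<in>X. if x \<in> A then g x else 0)"
    by (intro sum.cong) auto
  also have "\<dots> = sum g (X \<inter> A)"
    using assms(1) by (simp add: sum.inter_restrict)
  also have "X \<inter> A = A"
    using assms(2) by blast
  finally show ?thesis by simp
qed

lemma sum_symdiff:
  assumes "finite A" "finite B"
  shows "sum g (symdiff A B) = sum g A + (sum g B :: bit)"
proof -
  have fin: "finite (A \<union> B)" using assms by simp
  have "sum g (symdiff A B) = (\<Sum>x\<in>A \<union> B. (of_bool (x \<in> symdiff A B) :: bit) * g x)"
    by (rule sum_eq_sum_superset_of_bool[OF fin]) (auto simp: symdiff_def)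
  also have "\<dots> = (\<Sum>x\<in>A \<union> B. of_bool (x \<in> A) * g x) + (\<Sum>x\<in>A \<union> B. of_bool (x \<in> B) * g x)"
    by (simp add: of_bool_mem_symdiff distrib_right sum.distrib)
  also have "\<dots> = sum g A + sum g B"
    using sum_eq_sum_superset_of_bool[OF fin, of A g] sum_eq_sum_superset_of_bool[OF fin, of B g]
    by simp
  finally show ?thesis .
qed

lemma finite_basis_prod [simp]: "finite (basis_prod G d e)"
  by (simp add: basis_prod_def)

lemma fprod_subset_UN_basis_prod: "fprod G S T \<subseteq> (\<Union>d\<in>S. \<Union>e\<in>T. basis_prod G d e)"
proof
  fix x assume "x \<in> fprod G S T"
  then have "{(d, e). d \<in> S \<and> e \<in> T \<and> x \<in> basis_prod G d e} \<noteq> {}"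
    unfolding fprod_def by (metis (no_types, lifting) card.empty mem_Collect_eq odd_card_imp_not_empty)
  then show "x \<in> (\<Union>d\<in>S. \<Union>e\<in>T. basis_prod G d e)" by auto
qed

lemma finite_fprod [simp]: "finite S \<Longrightarrow> finite T \<Longrightarrow> finite (fprod G S T)"
  by (rule finite_subset[OF fprod_subset_UN_basis_prod]) auto

lemma sum_fprod:
  assumes "finite S" "finite T"
  shows "sum g (fprod G S T) = (\<Sum>d\<in>S. \<Sum>e\<in>T. (sum g (basis_prod G d e) :: bit))"
proof -
  define X where "X = (\<Union>d\<in>S. \<Union>e\<in>T. basis_prod G d e)"
  have fin: "finite X" using assms by (simp add: X_def)
  have "sum g (fprod G S T) = (\<Sum>x\<in>X. (of_bool (x \<in> fprod G S T) :: bit) * g x)"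
    by (rule sum_eq_sum_superset_of_bool[OF fin]) (simp add: X_def fprod_subset_UN_basis_prod)
  also have "\<dots> = (\<Sum>x\<in>X. \<Sum>d\<in>S. \<Sum>e\<in>T. of_bool (x \<in> basis_prod G d e) * g x)"
    by (simp add: of_bool_mem_fprod[OF assms] sum_distrib_right)
  also have "\<dots> = (\<Sum>d\<in>S. \<Sum>e\<in>T. \<Sum>x\<in>X. of_bool (x \<in> basis_prod G d e) * g x)"
    by (subst sum.swap) (simp add: sum.swap[of _ X])
  also have "\<dots> = (\<Sum>d\<in>S. \<Sum>e\<in>T. sum g (basis_prod G d e))"
    by (intro sum.cong refl sum_eq_sum_superset_of_bool[symmetric] fin) (auto simp: X_def)
  finally show ?thesis .
qed

lemma fprod_symdiff_left:
  assumes "finite S" "finite S'" "finite T"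
  shows "fprod G (symdiff S S') T = symdiff (fprod G S T) (fprod G S' T)"
  by (rule set_eqI_of_bool_bit)
    (simp add: of_bool_mem_symdiff of_bool_mem_fprod assms sum_symdiff)

lemma fprod_symdiff_right:
  assumes "finite S" "finite T" "finite T'"
  shows "fprod G S (symdiff T T') = symdiff (fprod G S T) (fprod G S T')"
  by (rule set_eqI_of_bool_bit)
    (simp add: of_bool_mem_symdiff of_bool_mem_fprod assms sum_symdiff sum.distrib)

lemma fprod_commute:
  assumes "finite S" "finite T"
    and "\<And>d e. d \<in> S \<Longrightarrow> e \<in> T \<Longrightarrow> basis_prod G d e = basis_prod G e d"
  shows "fprod G S T = fprod G T S"
proof (rule set_eqI_of_bool_bit)
  fix x
  have "(\<Sum>d\<in>S. \<Sum>e\<in>T. (of_bool (x \<in> basis_prod G d e) :: bit))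
      = (\<Sum>d\<in>S. \<Sum>e\<in>T. of_bool (x \<in> basis_prod G e d))"
    using assms(3) by (intro sum.cong refl) auto
  then show "(of_bool (x \<in> fprod G S T) :: bit) = of_bool (x \<in> fprod G T S)"
    using assms by (simp add: of_bool_mem_fprod sum.swap[of _ S])
qed

lemma fform_symdiff_left:
  assumes "finite S" "finite S'" "finite T"
  shows "fform G (symdiff S S') T \<longleftrightarrow> fform G S T \<noteq> fform G S' T"
proof -
  have "(of_bool (fform G (symdiff S S') T) :: bit) = of_bool (fform G S T) + of_bool (fform G S' T)"
    by (simp add: of_bool_fform assms sum_symdiff)
  then show ?thesis
    by (cases "fform G S T"; cases "fform G S' T"; cases "fform G (symdiff S S') T") auto
qed

lemma fform_fprod_assoc:
  assumes "finite S" "finite T" "finite U"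
    and basis: "\<And>d e u. d \<in> S \<Longrightarrow> e \<in> T \<Longrightarrow> u \<in> U \<Longrightarrow>
       (\<Sum>x\<in>basis_prod G d e. (of_bool (\<not> commute G x u) :: bit))
       = (\<Sum>y\<in>basis_prod G e u. of_bool (\<not> commute G d y))"
  shows "fform G (fprod G S T) U \<longleftrightarrow> fform G S (fprod G T U)"
proof -
  have "(of_bool (fform G (fprod G S T) U) :: bit)
      = (\<Sum>x\<in>fprod G S T. \<Sum>u\<in>U. of_bool (\<not> commute G x u))"
    by (simp add: of_bool_fform assms)
  also have "\<dots> = (\<Sum>d\<in>S. \<Sum>e\<in>T. \<Sum>u\<in>U. \<Sum>x\<in>basis_prod G d e. of_bool (\<not> commute G x u))"
    by (simp add: sum_fprod[OF assms(1,2)] sum.swap[of _ "basis_prod G _ _"])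
  also have "\<dots> = (\<Sum>d\<in>S. \<Sum>e\<in>T. \<Sum>u\<in>U. \<Sum>y\<in>basis_prod G e u. of_bool (\<not> commute G d y))"
    by (intro sum.cong refl basis)
  also have "\<dots> = (\<Sum>d\<in>S. \<Sum>y\<in>fprod G T U. of_bool (\<not> commute G d y))"
    by (intro sum.cong refl sum_fprod[OF assms(2,3), symmetric])
  also have "\<dots> = of_bool (fform G S (fprod G T U))"
    by (simp add: of_bool_fform assms)
  finally show ?thesis by (metis of_bool_eq_iff)
qed

section \<open>Groups generated by 3-transpositions\<close>

lemma commute_sym: "commute G x y \<longleftrightarrow> commute G y x"
  unfolding commute_def by auto

context group
begin

lemma conjg_closed [simp]: "x \<in> carrier G \<Longrightarrow> g \<in> carrier G \<Longrightarrow> conjg G x g \<in> carrier G"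
  by (simp add: conjg_def)

lemma conjg_mult:
  "x \<in> carrier G \<Longrightarrow> y \<in> carrier G \<Longrightarrow> g \<in> carrier G \<Longrightarrow>
   conjg G x g \<otimes> conjg G y g = conjg G (x \<otimes> y) g"
  unfolding conjg_def by (simp add: m_assoc[symmetric]) (simp add: m_assoc)

lemma conjg_eq_iff:
  "x \<in> carrier G \<Longrightarrow> y \<in> carrier G \<Longrightarrow> g \<in> carrier G \<Longrightarrow> conjg G x g = conjg G y g \<longleftrightarrow> x = y"
  unfolding conjg_def by (simp add: m_assoc)

lemma commute_conjg_iff:
  "x \<in> carrier G \<Longrightarrow> y \<in> carrier G \<Longrightarrow> g \<in> carrier G \<Longrightarrow>
   commute G (conjg G x g) (conjg G y g) \<longleftrightarrow> commute G x y"
  unfolding commute_def by (simp add: conjg_mult conjg_eq_iff)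

lemma conjg_eq_self_iff:
  "x \<in> carrier G \<Longrightarrow> g \<in> carrier G \<Longrightarrow> conjg G x g = x \<longleftrightarrow> commute G x g"
  unfolding conjg_def commute_def by (simp add: inv_solve_left' m_assoc)

lemma commute_conjg_right_iff:
  assumes "x \<in> carrier G" "y \<in> carrier G" "g \<in> carrier G" "commute G x g"
  shows "commute G x (conjg G y g) \<longleftrightarrow> commute G x y"
  using commute_conjg_iff[of x y g] conjg_eq_self_iff[of x g] assms by simp

lemma conjg_conjg_involution:
  "x \<in> carrier G \<Longrightarrow> g \<in> carrier G \<Longrightarrow> g \<otimes> g = \<one> \<Longrightarrow> conjg G (conjg G x g) g = x"
  unfolding conjg_def by (smt (verit) inv_closed inv_equality m_assoc m_closed r_inv r_one)

lemma conjg_eq_conjugatorD: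
  "x \<in> carrier G \<Longrightarrow> g \<in> carrier G \<Longrightarrow> conjg G x g = g \<Longrightarrow> x = g"
  unfolding conjg_def by (metis inv_closed inv_solve_left m_assoc m_closed r_inv r_one)

text \<open>\<open>(de)\<^sup>3 = 1\<close> gives \<open>ede = ded\<close>; orders 1 and 2 would make \<open>d\<close> and \<open>e\<close> commute.\<close>

lemma involutions_braid:
  assumes d: "d \<in> carrier G" "d \<otimes> d = \<one>" and e: "e \<in> carrier G" "e \<otimes> e = \<one>"
    and ord: "ord (d \<otimes> e) \<in> {1, 2, 3}" and noncomm: "\<not> commute G d e"
  shows "conjg G d e = conjg G e d"
proof -
  have pow: "(d \<otimes> e) [^] ord (d \<otimes> e) = \<one>" using d e pow_ord_eq_1 by simp
  have inv_d: "inv d = d" using d inv_equality by blast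
  have inv_e: "inv e = e" using e inv_equality by blast
  consider "ord (d \<otimes> e) = 1" | "ord (d \<otimes> e) = 2" | "ord (d \<otimes> e) = 3" using ord by auto
  then show ?thesis
  proof cases
    case 1
    then have "d \<otimes> e = \<one>" using pow d e by simp
    then have "commute G d e" unfolding commute_def by (simp add: d(1) e(1) inv_comm)
    with noncomm show ?thesis by simp
  next
    case 2
    then have "d \<otimes> e \<otimes> (d \<otimes> e) = \<one>" using pow d e by (simp add: numeral_2_eq_2)
    then have "commute G d e" unfolding commute_def
      by (metis d(1) e(1) inv_d inv_e inv_mult_group inv_unique' m_closed)
    with noncomm show ?thesis by simp
  next
    case 3
    then have "d \<otimes> e \<otimes> (d \<otimes> e) \<otimes> (d \<otimes> e) = \<one>" using pow d e by (simp add: numeral_3_eq_3)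
    then show ?thesis unfolding conjg_def using inv_d inv_e
      by (metis (no_types, opaque_lifting) d(1) e(1) inv_solve_right inv_equality m_assoc m_closed)
  qed
qed

end

locale three_transposition =
  fixes G :: "('g, 'm) monoid_scheme" (structure) and D :: "'g set"
  assumes fischer_setting: "fischer_setting G D"

sublocale three_transposition \<subseteq> group G
  using fischer_setting by (simp add: fischer_setting_def)

context three_transposition
begin

lemma conjugacy_class: obtains x where "x \<in> carrier G" "x \<otimes> x = \<one>"
  "D = {inv g \<otimes> x \<otimes> g | g. g \<in> carrier G}"
  using fischer_setting by (auto simp: fischer_setting_def)

lemma involution:
  assumes "d \<in> D" shows "d \<in> carrier G" "d \<otimes> d = \<one>"
proof -
  obtain x where x: "x \<in> carrier G" "x \<otimes> x = \<one>" "D = {inv g \<otimes> x \<otimes> g | g. g \<in> carrier G}"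
    by (rule conjugacy_class)
  then obtain g where g: "g \<in> carrier G" "d = inv g \<otimes> x \<otimes> g" using assms by auto
  have "d \<otimes> d = inv g \<otimes> (x \<otimes> x) \<otimes> g"
    using g x by (simp add: m_assoc[symmetric]) (simp add: m_assoc)
  then show "d \<in> carrier G" "d \<otimes> d = \<one>" using g x by simp_all
qed

lemma conjg_in_class:
  assumes "d \<in> D" "e \<in> D" shows "conjg G d e \<in> D"
proof -
  obtain x where x: "x \<in> carrier G" "x \<otimes> x = \<one>" "D = {inv g \<otimes> x \<otimes> g | g. g \<in> carrier G}"
    by (rule conjugacy_class)
  then obtain g where g: "g \<in> carrier G" "d = inv g \<otimes> x \<otimes> g" using assms by auto
  have e: "e \<in> carrier G" using involution assms(2) by blast
  have "conjg G d e = inv (g \<otimes> e) \<otimes> x \<otimes> (g \<otimes> e)"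
    using g x e unfolding conjg_def by (simp add: inv_mult_group m_assoc)
  then show ?thesis using x g e by auto
qed

lemma braid:
  assumes "d \<in> D" "e \<in> D" "\<not> commute G d e"
  shows "conjg G d e = conjg G e d"
proof (rule involutions_braid)
  show "ord (d \<otimes> e) \<in> {1, 2, 3}" using fischer_setting assms by (auto simp: fischer_setting_def)
qed (use involution assms in auto)

lemma basis_prod_commute:
  assumes "d \<in> D" "e \<in> D"
  shows "basis_prod G d e = basis_prod G e d"
  using braid[OF assms] braid[OF assms(2,1)] commute_sym[of G d e]
  unfolding basis_prod_def by auto

lemma sum_basis_prod:
  assumes "d \<in> D" "e \<in> D" "\<not> commute G d e"
  shows "sum f (basis_prod G d e) = f d + f e + (f (conjg G d e) :: bit)"
proof -
  have carrier: "d \<in> carrier G" "e \<in> carrier G" using involution assms by blast+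
  have "d \<noteq> e" using assms(3) unfolding commute_def by auto
  moreover have "conjg G d e \<noteq> d" using conjg_eq_self_iff carrier assms(3) by blast
  moreover have "conjg G d e \<noteq> e" using conjg_eq_conjugatorD carrier \<open>d \<noteq> e\<close> by blast
  ultimately show ?thesis using assms(3) by (simp add: basis_prod_def add.assoc)
qed

lemma commute_conjg_conjg_swap:
  assumes D: "d \<in> D" "e \<in> D" "u \<in> D" and de: "\<not> commute G d e" and eu: "\<not> commute G e u"
  shows "commute G (conjg G d e) u \<longleftrightarrow> commute G d (conjg G e u)"
proof -
  have carrier: "d \<in> carrier G" "e \<in> carrier G" "u \<in> carrier G" using involution D by blast+
  have de_ed: "conjg G d e = conjg G e d" by (rule braid[OF D(1,2) de])
  show ?thesis
  proof (cases "commute G d u")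
    case True
    then have "commute G u d" by (simp add: commute_sym)
    then have "commute G u (conjg G e d) \<longleftrightarrow> commute G u e"
      using commute_conjg_right_iff[of u e d] carrier by blast
    moreover have "commute G d (conjg G e u) \<longleftrightarrow> commute G d e"
      using commute_conjg_right_iff[of d e u] True carrier by blast
    ultimately show ?thesis using de eu de_ed commute_sym[of G u] by simp
  next
    case False
    then have ud_du: "conjg G u d = conjg G d u" using braid[OF D(3,1)] by (simp add: commute_sym)
    have "commute G (conjg G d e) u \<longleftrightarrow> commute G (conjg G e d) (conjg G (conjg G u d) d)"
      using de_ed conjg_conjg_involution[of u d] carrier involution(2)[OF D(1)] by simp
    also have "\<dots> \<longleftrightarrow> commute G e (conjg G d u)"
      using commute_conjg_iff[of e "conjg G u d" d] carrier ud_du by simp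
    also have "\<dots> \<longleftrightarrow> commute G (conjg G e u) (conjg G (conjg G d u) u)"
      using commute_conjg_iff[of e "conjg G d u" u] carrier by simp
    also have "\<dots> \<longleftrightarrow> commute G (conjg G e u) d"
      using conjg_conjg_involution[of d u] carrier involution(2)[OF D(3)] by simp
    finally show ?thesis by (simp add: commute_sym)
  qed
qed

text \<open>The two sums are \<open>\<langle>d*e, u\<rangle>\<close> and \<open>\<langle>d, e*u\<rangle>\<close> in \<open>\<bbbF>\<^sub>2\<close>.\<close>

lemma form_basis_prod_assoc:
  assumes D: "d \<in> D" "e \<in> D" "u \<in> D"
  shows "(\<Sum>x\<in>basis_prod G d e. (of_bool (\<not> commute G x u) :: bit))
       = (\<Sum>y\<in>basis_prod G e u. of_bool (\<not> commute G d y))"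
proof -
  have carrier: "d \<in> carrier G" "e \<in> carrier G" "u \<in> carrier G" using involution D by blast+
  consider "commute G d e" "commute G e u" | "commute G d e" "\<not> commute G e u"
    | "\<not> commute G d e" "commute G e u" | "\<not> commute G d e" "\<not> commute G e u"
    by blast
  then show ?thesis
  proof cases
    case 1
    then show ?thesis by (simp add: basis_prod_def)
  next
    case 2
    have "commute G d (conjg G u e) \<longleftrightarrow> commute G d u"
      using commute_conjg_right_iff[of d u e] 2(1) carrier by blast
    then have "commute G d (conjg G e u) \<longleftrightarrow> commute G d u"
      using braid[OF D(2,3) 2(2)] by simp
    then show ?thesis using 2 sum_basis_prod[OF D(2,3)] by (simp add: basis_prod_def)
  next
    case 3
    then have "commute G u e" by (simp add: commute_sym)
    then have "commute G u (conjg G d e) \<longleftrightarrow> commute G u d"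
      using commute_conjg_right_iff[of u d e] carrier by blast
    then have "commute G (conjg G d e) u \<longleftrightarrow> commute G d u"
      by (simp add: commute_sym)
    then show ?thesis using 3 sum_basis_prod[OF D(1,2)] by (simp add: basis_prod_def)
  next
    case 4
    then show ?thesis
      using sum_basis_prod[OF D(1,2)] sum_basis_prod[OF D(2,3)] commute_conjg_conjg_swap[OF D 4]
      by simp
  qed
qed

end

section \<open>Algebras over \<open>\<bbbF>\<^sub>2\<close> and their quotients\<close>

locale f2_algebra =
  fixes A :: "'b f2alg"
  assumes zero_closed: "azero A \<in> acar A"
    and add_closed: "x \<in> acar A \<Longrightarrow> y \<in> acar A \<Longrightarrow> aadd A x y \<in> acar A"
    and mul_closed: "x \<in> acar A \<Longrightarrow> y \<in> acar A \<Longrightarrow> amul A x y \<in> acar A"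
    and add_assoc: "x \<in> acar A \<Longrightarrow> y \<in> acar A \<Longrightarrow> z \<in> acar A \<Longrightarrow>
      aadd A (aadd A x y) z = aadd A x (aadd A y z)"
    and add_commute: "x \<in> acar A \<Longrightarrow> y \<in> acar A \<Longrightarrow> aadd A x y = aadd A y x"
    and add_zero_left: "x \<in> acar A \<Longrightarrow> aadd A (azero A) x = x"
    and add_self: "x \<in> acar A \<Longrightarrow> aadd A x x = azero A"
    and distrib_right: "x \<in> acar A \<Longrightarrow> y \<in> acar A \<Longrightarrow> z \<in> acar A \<Longrightarrow>
      amul A (aadd A x y) z = aadd A (amul A x z) (amul A y z)"
    and distrib_left: "x \<in> acar A \<Longrightarrow> y \<in> acar A \<Longrightarrow> z \<in> acar A \<Longrightarrow>
      amul A x (aadd A y z) = aadd A (amul A x y) (amul A x z)"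
begin

lemma add_cancel_left: "x \<in> acar A \<Longrightarrow> y \<in> acar A \<Longrightarrow> aadd A x (aadd A x y) = y"
  by (simp add: add_assoc[symmetric] add_self add_zero_left)

lemma add_telescope:
  "x \<in> acar A \<Longrightarrow> y \<in> acar A \<Longrightarrow> z \<in> acar A \<Longrightarrow> aadd A (aadd A x y) (aadd A y z) = aadd A x z"
  by (simp add: add_assoc add_closed add_cancel_left)

lemma add_swap_middle:
  assumes "a \<in> acar A" "b \<in> acar A" "c \<in> acar A" "d \<in> acar A"
  shows "aadd A (aadd A a b) (aadd A c d) = aadd A (aadd A a c) (aadd A b d)"
proof -
  have "aadd A b (aadd A c d) = aadd A c (aadd A b d)"
    using assms by (metis add_assoc add_commute)
  then show ?thesis using assms by (simp add: add_assoc add_closed)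
qed

end

lemma restrict_alg_simps [simp]:
  "acar (restrict_alg A B) = B" "aadd (restrict_alg A B) = aadd A"
  "amul (restrict_alg A B) = amul A" "azero (restrict_alg A B) = azero A"
  by (simp_all add: restrict_alg_def)

lemma (in f2_algebra) f2_algebra_restrict:
  assumes "subalgebra B A" shows "f2_algebra (restrict_alg A B)"
  using assms unfolding subalgebra_def
  by unfold_locales (auto intro: add_assoc add_commute add_zero_left add_self
      distrib_right distrib_left)

definition alg_hom :: "('b \<Rightarrow> 'c) \<Rightarrow> 'b f2alg \<Rightarrow> 'c f2alg \<Rightarrow> bool" where
  "alg_hom f A A' \<longleftrightarrow> (\<forall>x\<in>acar A. \<forall>y\<in>acar A.
     f (aadd A x y) = aadd A' (f x) (f y) \<and> f (amul A x y) = amul A' (f x) (f y))"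

lemma alg_iso_iff_bij_hom: "alg_iso A A' \<longleftrightarrow> (\<exists>f. bij_betw f (acar A) (acar A') \<and> alg_hom f A A')"
  by (simp add: alg_iso_def alg_hom_def)

lemma alg_hom_comp:
  "alg_hom f A B \<Longrightarrow> f ` acar A \<subseteq> acar B \<Longrightarrow> alg_hom g B C \<Longrightarrow> alg_hom (g \<circ> f) A C"
  unfolding alg_hom_def by (simp add: image_subset_iff)

text \<open>The isomorphism sends \<open>p1 x\<close> to \<open>p2 x\<close>.\<close>

lemma alg_iso_of_same_fibres:
  assumes C: "f2_algebra C"
    and hom1: "alg_hom p1 C A1" and onto1: "p1 ` acar C = acar A1"
    and hom2: "alg_hom p2 C A2" and onto2: "p2 ` acar C = acar A2"
    and fibres: "\<And>x y. x \<in> acar C \<Longrightarrow> y \<in> acar C \<Longrightarrow> p1 x = p1 y \<longleftrightarrow> p2 x = p2 y"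
  shows "alg_iso A1 A2"
proof -
  define f where "f z = p2 (SOME x. x \<in> acar C \<and> p1 x = z)" for z
  have f: "f (p1 x) = p2 x" if "x \<in> acar C" for x
  proof -
    have "\<exists>x'. x' \<in> acar C \<and> p1 x' = p1 x" using that by blast
    then have "(SOME x'. x' \<in> acar C \<and> p1 x' = p1 x) \<in> acar C \<and> p1 (SOME x'. x' \<in> acar C \<and> p1 x' = p1 x) = p1 x"
      by (rule someI_ex)
    then show ?thesis unfolding f_def using fibres that by blast
  qed
  have "bij_betw f (acar A1) (acar A2)"
  proof (rule bij_betw_imageI)
    show "inj_on f (acar A1)"
      unfolding onto1[symmetric] by (rule inj_onI) (auto simp: f fibres)
    show "f ` acar A1 = acar A2"
      unfolding onto1[symmetric] onto2[symmetric] image_image using f by (simp cong: image_cong)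
  qed
  moreover have "alg_hom f A1 A2"
  proof -
    have "f (aadd A1 (p1 x) (p1 y)) = aadd A2 (f (p1 x)) (f (p1 y)) \<and>
          f (amul A1 (p1 x) (p1 y)) = amul A2 (f (p1 x)) (f (p1 y))"
      if xy: "x \<in> acar C" "y \<in> acar C" for x y
      using hom1 hom2 xy f[OF f2_algebra.add_closed[OF C xy]] f[OF f2_algebra.mul_closed[OF C xy]]
      by (simp add: alg_hom_def f)
    then show ?thesis unfolding alg_hom_def onto1[symmetric] by blast
  qed
  ultimately show ?thesis by (auto simp: alg_iso_iff_bij_hom)
qed

locale f2_quotient = f2_algebra +
  fixes I :: "'b set"
  assumes ideal: "alg_ideal I A"
begin

lemma ideal_subset: "i \<in> I \<Longrightarrow> i \<in> acar A"
  and ideal_zero: "azero A \<in> I"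
  and ideal_add: "i \<in> I \<Longrightarrow> j \<in> I \<Longrightarrow> aadd A i j \<in> I"
  and ideal_mul_left: "i \<in> I \<Longrightarrow> a \<in> acar A \<Longrightarrow> amul A a i \<in> I"
  and ideal_mul_right: "i \<in> I \<Longrightarrow> a \<in> acar A \<Longrightarrow> amul A i a \<in> I"
  using ideal by (auto simp: alg_ideal_def)

lemma coset_eq_Collect:
  assumes x: "x \<in> acar A" shows "coset A I x = {z \<in> acar A. aadd A x z \<in> I}"
proof -
  have "z \<in> (\<lambda>i. aadd A x i) ` I" if "z \<in> acar A" "aadd A x z \<in> I" for z
    using that add_cancel_left[OF x, of z] by (metis image_eqI)
  then show ?thesis
    unfolding coset_def using x by (auto simp: add_cancel_left ideal_subset add_closed)
qed

lemma mem_coset_self: "x \<in> acar A \<Longrightarrow> x \<in> coset A I x"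
  by (simp add: coset_eq_Collect add_self ideal_zero)

lemma coset_eq_iff:
  assumes x: "x \<in> acar A" and y: "y \<in> acar A"
  shows "coset A I x = coset A I y \<longleftrightarrow> aadd A x y \<in> I"
proof
  assume "coset A I x = coset A I y"
  then show "aadd A x y \<in> I" using mem_coset_self[OF y] coset_eq_Collect[OF x] by auto
next
  assume xy: "aadd A x y \<in> I"
  then have yx: "aadd A y x \<in> I" using add_commute x y by simp
  have "aadd A x z \<in> I \<longleftrightarrow> aadd A y z \<in> I" if z: "z \<in> acar A" for z
    using ideal_add[OF xy, of "aadd A y z"] ideal_add[OF yx, of "aadd A x z"]
      add_telescope[OF x y z] add_telescope[OF y x z] by auto
  then show "coset A I x = coset A I y" by (auto simp: coset_eq_Collect x y)
qed

lemma coset_some: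
  assumes x: "x \<in> acar A"
  shows "(SOME z. z \<in> coset A I x) \<in> acar A" "coset A I (SOME z. z \<in> coset A I x) = coset A I x"
proof -
  define z where "z = (SOME z. z \<in> coset A I x)"
  have "z \<in> coset A I x" unfolding z_def using mem_coset_self[OF x] by (rule someI)
  then have z: "z \<in> acar A" "aadd A x z \<in> I" using coset_eq_Collect[OF x] by auto
  then show "(SOME z. z \<in> coset A I x) \<in> acar A" "coset A I (SOME z. z \<in> coset A I x) = coset A I x"
    using x by (simp_all add: z_def[symmetric] coset_eq_iff add_commute)
qed

lemma coset_add_cong:
  assumes "x \<in> acar A" "x' \<in> acar A" "y \<in> acar A" "y' \<in> acar A"
    and "coset A I x = coset A I x'" "coset A I y = coset A I y'"
  shows "coset A I (aadd A x y) = coset A I (aadd A x' y')"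
  using assms ideal_add by (simp add: coset_eq_iff add_closed add_swap_middle)

text \<open>\<open>xy + x'y' = x(y + y') + (x + x')y'\<close>, which lies in \<open>I\<close>.\<close>

lemma coset_mul_cong:
  assumes x: "x \<in> acar A" "x' \<in> acar A" and y: "y \<in> acar A" "y' \<in> acar A"
    and "coset A I x = coset A I x'" "coset A I y = coset A I y'"
  shows "coset A I (amul A x y) = coset A I (amul A x' y')"
proof -
  have "aadd A (amul A x y) (amul A x' y') = aadd A (amul A x (aadd A y y')) (amul A (aadd A x x') y')"
    using x y by (simp add: distrib_left distrib_right mul_closed add_telescope)
  moreover have "aadd A (amul A x (aadd A y y')) (amul A (aadd A x x') y') \<in> I"
    using assms by (simp add: coset_eq_iff ideal_add ideal_mul_left ideal_mul_right)
  ultimately show ?thesis using x y by (simp add: coset_eq_iff mul_closed)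
qed

lemma quot_alg_simps:
  "acar (quot_alg A I) = coset A I ` acar A"
  "azero (quot_alg A I) = coset A I (azero A)"
  by (simp_all add: quot_alg_def)

lemma quot_add:
  assumes x: "x \<in> acar A" and y: "y \<in> acar A"
  shows "aadd (quot_alg A I) (coset A I x) (coset A I y) = coset A I (aadd A x y)"
proof -
  have "coset A I (aadd A (SOME z. z \<in> coset A I x) (SOME z. z \<in> coset A I y)) = coset A I (aadd A x y)"
    using coset_some[OF x] coset_some[OF y] x y by (intro coset_add_cong) auto
  then show ?thesis by (simp add: quot_alg_def)
qed

lemma quot_mul:
  assumes x: "x \<in> acar A" and y: "y \<in> acar A"
  shows "amul (quot_alg A I) (coset A I x) (coset A I y) = coset A I (amul A x y)"
proof -
  have "coset A I (amul A (SOME z. z \<in> coset A I x) (SOME z. z \<in> coset A I y)) = coset A I (amul A x y)"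
    using coset_some[OF x] coset_some[OF y] x y by (intro coset_mul_cong) auto
  then show ?thesis by (simp add: quot_alg_def)
qed

lemma quot_hom: "alg_hom (coset A I) A (quot_alg A I)"
  by (simp add: alg_hom_def quot_add quot_mul)

lemma f2_algebra_quot: "f2_algebra (quot_alg A I)"
proof unfold_locales
  fix X Y Z assume "X \<in> acar (quot_alg A I)" "Y \<in> acar (quot_alg A I)" "Z \<in> acar (quot_alg A I)"
  then obtain x y z where xyz: "x \<in> acar A" "y \<in> acar A" "z \<in> acar A"
    and XYZ: "X = coset A I x" "Y = coset A I y" "Z = coset A I z"
    by (auto simp: quot_alg_simps)
  show "aadd (quot_alg A I) X Y = aadd (quot_alg A I) Y X"
    using xyz by (simp add: XYZ quot_add add_commute)
  show "aadd (quot_alg A I) X Y \<in> acar (quot_alg A I)"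
    "amul (quot_alg A I) X Y \<in> acar (quot_alg A I)"
    "aadd (quot_alg A I) (aadd (quot_alg A I) X Y) Z = aadd (quot_alg A I) X (aadd (quot_alg A I) Y Z)"
    "aadd (quot_alg A I) (azero (quot_alg A I)) X = X"
    "aadd (quot_alg A I) X X = azero (quot_alg A I)"
    "amul (quot_alg A I) (aadd (quot_alg A I) X Y) Z =
       aadd (quot_alg A I) (amul (quot_alg A I) X Z) (amul (quot_alg A I) Y Z)"
    "amul (quot_alg A I) X (aadd (quot_alg A I) Y Z) =
       aadd (quot_alg A I) (amul (quot_alg A I) X Y) (amul (quot_alg A I) X Z)"
    using xyz by (simp_all add: XYZ quot_alg_simps quot_add quot_mul add_closed mul_closed
        zero_closed add_assoc add_zero_left add_self distrib_right distrib_left)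
qed (simp add: quot_alg_simps zero_closed)


lemma subalgebra_image_coset:
  assumes S: "subalgebra S A"
  shows "subalgebra (coset A I ` S) (quot_alg A I)"
  unfolding subalgebra_def
proof (intro conjI ballI)
  have sub: "S \<subseteq> acar A" using S by (simp add: subalgebra_def)
  then show "coset A I ` S \<subseteq> acar (quot_alg A I)" by (auto simp: quot_alg_simps)
  show "azero (quot_alg A I) \<in> coset A I ` S" using S by (simp add: quot_alg_simps subalgebra_def)
  fix X Y assume "X \<in> coset A I ` S" "Y \<in> coset A I ` S"
  then obtain x y where xy: "x \<in> S" "y \<in> S" and "X = coset A I x" "Y = coset A I y" by blast
  moreover have "x \<in> acar A" "y \<in> acar A" using xy sub by auto
  ultimately show "aadd (quot_alg A I) X Y \<in> coset A I ` S" "amul (quot_alg A I) X Y \<in> coset A I ` S"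
    using S by (auto simp: subalgebra_def quot_add quot_mul)
qed

lemma alg_ideal_image_coset:
  assumes S: "subalgebra S A" and W: "alg_ideal W (restrict_alg A S)"
  shows "alg_ideal (coset A I ` W) (restrict_alg (quot_alg A I) (coset A I ` S))"
  unfolding alg_ideal_def restrict_alg_simps
proof (intro conjI ballI)
  have sub: "S \<subseteq> acar A" using S by (simp add: subalgebra_def)
  have WS: "W \<subseteq> S" using W by (simp add: alg_ideal_def)
  show "coset A I ` W \<subseteq> coset A I ` S" using WS by blast
  show "azero (quot_alg A I) \<in> coset A I ` W" using W by (simp add: quot_alg_simps alg_ideal_def)
  fix X Y assume "X \<in> coset A I ` W" "Y \<in> coset A I ` W"
  then obtain x y where xy: "x \<in> W" "y \<in> W" and "X = coset A I x" "Y = coset A I y" by blast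
  moreover have "x \<in> acar A" "y \<in> acar A" using xy WS sub by auto
  ultimately show "aadd (quot_alg A I) X Y \<in> coset A I ` W"
    using W by (auto simp: alg_ideal_def quot_add)
next
  have sub: "S \<subseteq> acar A" using S by (simp add: subalgebra_def)
  have WS: "W \<subseteq> S" using W by (simp add: alg_ideal_def)
  fix X Y assume "X \<in> coset A I ` W" "Y \<in> coset A I ` S"
  then obtain x y where xy: "x \<in> W" "y \<in> S" and "X = coset A I x" "Y = coset A I y" by blast
  moreover have "x \<in> acar A" "y \<in> acar A" using xy WS sub by auto
  ultimately show "amul (quot_alg A I) Y X \<in> coset A I ` W" "amul (quot_alg A I) X Y \<in> coset A I ` W"
    using W by (auto simp: alg_ideal_def quot_mul)
qed

lemma coset_in_image_coset_iff:
  assumes S: "subalgebra S A" and W: "alg_ideal W (restrict_alg A S)" and IS: "I \<inter> S \<subseteq> W"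
    and w: "w \<in> S"
  shows "coset A I w \<in> coset A I ` W \<longleftrightarrow> w \<in> W"
proof
  have WS: "W \<subseteq> S" using W by (simp add: alg_ideal_def)
  assume "coset A I w \<in> coset A I ` W"
  then obtain s where s: "s \<in> W" "coset A I w = coset A I s" by blast
  have carrier: "w \<in> acar A" "s \<in> acar A" using w s(1) WS S by (auto simp: subalgebra_def)
  have "aadd A w s \<in> I \<inter> S"
    using w s WS S carrier by (auto simp: coset_eq_iff subalgebra_def)
  then have "aadd A s (aadd A w s) \<in> W" using IS s(1) W by (auto simp: alg_ideal_def)
  moreover have "aadd A s (aadd A w s) = w"
    using carrier by (simp add: add_commute[of w s] add_cancel_left)
  ultimately show "w \<in> W" by simp
qed blast

text \<open>A form of the third isomorphism theorem: \<open>(S + I)/I\<close> modulo the image of \<open>W\<close> is \<open>S/W\<close>.\<close>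

lemma subquotient_iso:
  assumes S: "subalgebra S A" and W: "alg_ideal W (restrict_alg A S)" and IS: "I \<inter> S \<subseteq> W"
  shows "alg_iso (quot_alg (restrict_alg (quot_alg A I) (coset A I ` S)) (coset A I ` W))
                 (quot_alg (restrict_alg A S) W)"
proof -
  let ?R = "restrict_alg (quot_alg A I) (coset A I ` S)" and ?K = "coset A I ` W"
  have sub: "S \<subseteq> acar A" using S by (simp add: subalgebra_def)
  interpret Q: f2_algebra "quot_alg A I" by (rule f2_algebra_quot)
  interpret R: f2_quotient ?R ?K
    using Q.f2_algebra_restrict[OF subalgebra_image_coset[OF S]] alg_ideal_image_coset[OF S W]
    by (simp add: f2_quotient_def f2_quotient_axioms_def)
  interpret SW: f2_quotient "restrict_alg A S" W
    using f2_algebra_restrict[OF S] W by (simp add: f2_quotient_def f2_quotient_axioms_def)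
  have "alg_hom (coset A I) (restrict_alg A S) ?R"
    using quot_hom sub by (auto simp: alg_hom_def)
  then have hom1: "alg_hom (coset ?R ?K \<circ> coset A I) (restrict_alg A S) (quot_alg ?R ?K)"
    by (rule alg_hom_comp) (auto intro: R.quot_hom)
  have fibres: "(coset ?R ?K \<circ> coset A I) x = (coset ?R ?K \<circ> coset A I) y
      \<longleftrightarrow> coset (restrict_alg A S) W x = coset (restrict_alg A S) W y" if xy: "x \<in> S" "y \<in> S" for x y
  proof -
    have "x \<in> acar A" "y \<in> acar A" "coset A I x \<in> coset A I ` S" "coset A I y \<in> coset A I ` S"
      using xy sub by auto
    moreover have "aadd A x y \<in> S" using xy S by (simp add: subalgebra_def)
    ultimately show ?thesis
      using xy coset_in_image_coset_iff[OF S W IS \<open>aadd A x y \<in> S\<close>] by (simp add: R.coset_eq_iff SW.coset_eq_iff quot_add)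
  qed
  have onto1: "(coset ?R ?K \<circ> coset A I) ` acar (restrict_alg A S) = acar (quot_alg ?R ?K)"
    by (simp add: R.quot_alg_simps image_comp)
  show ?thesis
    using alg_iso_of_same_fibres[OF f2_algebra_restrict[OF S] hom1 onto1 SW.quot_hom SW.quot_alg_simps(1)[symmetric]]
      fibres by simp
qed

end

section \<open>The Fischer algebra\<close>

lemma fischer_alg_simps [simp]:
  "acar (fischer_alg G X) = {S. S \<subseteq> X \<and> finite S}"
  "aadd (fischer_alg G X) = symdiff" "amul (fischer_alg G X) = fprod G" "azero (fischer_alg G X) = {}"
  by (simp_all add: fischer_alg_def)

lemma restrict_fischer_alg: "restrict_alg (fischer_alg G D) (acar (fischer_alg G E)) = fischer_alg G E"
  by (simp add: restrict_alg_def fischer_alg_def)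

lemma fischer_rad_inter_subset:
  "E \<subseteq> D \<Longrightarrow> fischer_rad G D \<inter> acar (fischer_alg G E) \<subseteq> fischer_rad G E"
  by (auto simp: fischer_rad_def)

locale fischer_subspace = three_transposition +
  fixes X
  assumes subset_class: "X \<subseteq> D"
    and conjg_mem: "d \<in> X \<Longrightarrow> e \<in> X \<Longrightarrow> conjg G d e \<in> X"
begin

lemma fprod_subset:
  assumes "S \<subseteq> X" "T \<subseteq> X" shows "fprod G S T \<subseteq> X"
proof -
  have "basis_prod G d e \<subseteq> X" if "d \<in> S" "e \<in> T" for d e
    using that assms conjg_mem by (auto simp: basis_prod_def)
  then show ?thesis using fprod_subset_UN_basis_prod[of G S T] by blast
qed

lemma f2_algebra_fischer_alg: "f2_algebra (fischer_alg G X)"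
  by unfold_locales
    (auto simp: fprod_subset symdiff_subset fprod_symdiff_left fprod_symdiff_right, auto simp: symdiff_def)

lemma subalgebra_fischer_alg: "subalgebra (acar (fischer_alg G X)) (fischer_alg G D)"
  using subset_class f2_algebra.zero_closed[OF f2_algebra_fischer_alg]
    f2_algebra.add_closed[OF f2_algebra_fischer_alg] f2_algebra.mul_closed[OF f2_algebra_fischer_alg]
  by (auto simp: subalgebra_def)

text \<open>The radical is an ideal because the form is associative, \<open>\<langle>v*a, t\<rangle> = \<langle>v, a*t\<rangle>\<close>, and the
  product is commutative.\<close>

lemma fischer_rad_ideal: "alg_ideal (fischer_rad G X) (fischer_alg G X)"
proof -
  have fprod_rad: "fprod G v a \<in> fischer_rad G X"
    if v: "v \<in> fischer_rad G X" and a: "a \<in> acar (fischer_alg G X)" for v a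
  proof -
    have "\<not> fform G (fprod G v a) T" if T: "T \<in> acar (fischer_alg G X)" for T
    proof -
      have "fform G (fprod G v a) T \<longleftrightarrow> fform G v (fprod G a T)"
        using v a T subset_class
        by (intro fform_fprod_assoc form_basis_prod_assoc) (auto simp: fischer_rad_def)
      moreover have "fprod G a T \<in> acar (fischer_alg G X)"
        using a T by (simp add: fprod_subset)
      ultimately show ?thesis using v by (simp add: fischer_rad_def)
    qed
    moreover have "fprod G v a \<in> acar (fischer_alg G X)"
      using v a by (simp add: fischer_rad_def fprod_subset)
    ultimately show ?thesis by (simp add: fischer_rad_def)
  qed
  have fprod_comm: "fprod G a v = fprod G v a"
    if "a \<in> acar (fischer_alg G X)" "v \<in> acar (fischer_alg G X)" for a v
    using that subset_class by (intro fprod_commute basis_prod_commute) auto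
  show ?thesis
    unfolding alg_ideal_def
  proof (intro conjI ballI)
    show "fischer_rad G X \<subseteq> acar (fischer_alg G X)" by (auto simp: fischer_rad_def)
    show "azero (fischer_alg G X) \<in> fischer_rad G X" by (simp add: fischer_rad_def fform_def)
    fix v w assume "v \<in> fischer_rad G X" "w \<in> fischer_rad G X"
    then show "aadd (fischer_alg G X) v w \<in> fischer_rad G X"
      by (auto simp: fischer_rad_def fform_symdiff_left symdiff_subset)
  next
    fix v a assume v: "v \<in> fischer_rad G X" and a: "a \<in> acar (fischer_alg G X)"
    show "amul (fischer_alg G X) v a \<in> fischer_rad G X" using fprod_rad[OF v a] by simp
    moreover have "v \<in> acar (fischer_alg G X)" using v by (simp add: fischer_rad_def)
    ultimately show "amul (fischer_alg G X) a v \<in> fischer_rad G X" using fprod_comm a by simp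
  qed
qed

end

lemma (in three_transposition) fischer_subspace_class: "fischer_subspace G D D"
  by unfold_locales (auto intro: conjg_in_class)

theorem lemma2p8:
  fixes G :: "('g, 'm) monoid_scheme" and D E :: "'g set"
  assumes "fischer_setting G D"
    and "E \<subseteq> D"
    and "\<forall>d\<in>E. \<forall>e\<in>E. conjg G d e \<in> E"
  shows "\<exists>B I. subalgebra B (quot_alg (fischer_alg G D) (fischer_rad G D)) \<and>
           alg_ideal I (restrict_alg (quot_alg (fischer_alg G D) (fischer_rad G D)) B) \<and>
           alg_iso (quot_alg (restrict_alg (quot_alg (fischer_alg G D) (fischer_rad G D)) B) I)
                   (quot_alg (fischer_alg G E) (fischer_rad G E))"
proof -
  interpret three_transposition G D using assms(1) by (rule three_transposition.intro)
  interpret whole: fischer_subspace G D D by (rule fischer_subspace_class)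
  interpret E: fischer_subspace G D E using assms by unfold_locales auto
  interpret V: f2_quotient "fischer_alg G D" "fischer_rad G D"
    using whole.f2_algebra_fischer_alg whole.fischer_rad_ideal
    by (simp add: f2_quotient_def f2_quotient_axioms_def)
  let ?S = "acar (fischer_alg G E)"
  have S: "subalgebra ?S (fischer_alg G D)" by (rule E.subalgebra_fischer_alg)
  have W: "alg_ideal (fischer_rad G E) (restrict_alg (fischer_alg G D) ?S)"
    unfolding restrict_fischer_alg by (rule E.fischer_rad_ideal)
  have "fischer_rad G D \<inter> ?S \<subseteq> fischer_rad G E" using assms(2) by (rule fischer_rad_inter_subset)
  then show ?thesis
    using V.subalgebra_image_coset[OF S] V.alg_ideal_image_coset[OF S W] V.subquotient_iso[OF S W]
    unfolding restrict_fischer_alg by blast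
qed

end
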